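(* For every point $(w,z)\in\mathbb{R}^2$ there exist sequences $(p_n)_{n\ge1}$, $(q_n)_{n\ge1}$, $(\gamma_n)_{n\ge1}$ such that: (1) $(p_n)$ and $(q_n)$ are increasing sequences of rational numbers converging to $w$ and $z$ respectively; (2) each $\gamma_n$ is a positive rational number; (3) setting $\Delta_n:=p_{n+1}-p_n$, we have $0<\Delta_n<1$ and $q_{n+1}=q_n+\Delta_n(1+\gamma_n)$ for all $n$; (4) $\lim_{n\to\infty}\gamma_n/(\Delta_n)^{n-1}=0$. *)

theory Defs
  imports "HOL-Analysis.Analysis"
begin

end

theory Submission
  imports Defs
begin

text \<open>Take \<open>p\<^sub>n\<close> rational in the band \<open>(w - 2\<rho>\<^sub>n, w - \<rho>\<^sub>n)\<close> with \<open>\<rho>\<^sub>n = 3\<^sup>-\<^sup>n\<close>, so that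
  \<open>\<Delta>\<^sub>n\<close> lies between \<open>\<rho>\<^sub>n/3\<close> and \<open>2\<rho>\<^sub>n\<close>. Take \<open>t\<^sub>n\<close> rational in the much thinner band
  \<open>(z - w - 2\<sigma>\<^sub>n, z - w - \<sigma>\<^sub>n)\<close> with \<open>\<sigma>\<^sub>n = (\<rho>\<^sub>n/3)\<^sup>n \<rho>\<^sub>n \<le> \<Delta>\<^sub>n\<^sup>n \<rho>\<^sub>n\<close>; its increments are
  positive and smaller than \<open>2 \<Delta>\<^sub>n\<^sup>n \<rho>\<^sub>n\<close>. Then \<open>q = p + t\<close> and \<open>\<gamma>\<^sub>n = (t\<^sub>n\<^sub>+\<^sub>1 - t\<^sub>n)/\<Delta>\<^sub>n\<close> satisfy
  \<open>\<gamma>\<^sub>n/\<Delta>\<^sub>n\<^sup>n\<^sup>-\<^sup>1 = (t\<^sub>n\<^sub>+\<^sub>1 - t\<^sub>n)/\<Delta>\<^sub>n\<^sup>n < 2\<rho>\<^sub>n \<rightarrow> 0\<close>.\<close>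

definition lower_band :: "real \<Rightarrow> (nat \<Rightarrow> real) \<Rightarrow> (nat \<Rightarrow> real) \<Rightarrow> bool" where
  "lower_band x r f \<longleftrightarrow> (\<forall>n. x - 2 * r n < f n \<and> f n < x - r n)"

lemma Rats_lower_band_exists:
  assumes "\<And>n. 0 < r n"
  shows "\<exists>f. (\<forall>n. f n \<in> \<rat>) \<and> lower_band x r f"
proof -
  have "\<forall>n. \<exists>y \<in> \<rat>. x - 2 * r n < y \<and> y < x - r n"
  proof
    fix n
    have "x - 2 * r n < x - r n" using assms[of n] by simp
    then show "\<exists>y \<in> \<rat>. x - 2 * r n < y \<and> y < x - r n"
      using Rats_dense_in_real by blast
  qed
  then obtain f where "\<forall>n. f n \<in> \<rat> \<and> x - 2 * r n < f n \<and> f n < x - r n"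
    by metis
  then show ?thesis by (auto simp: lower_band_def)
qed

lemma lower_band_LIMSEQ:
  assumes "lower_band x r f" and "r \<longlonglongrightarrow> 0"
  shows "f \<longlonglongrightarrow> x"
proof (rule tendsto_sandwich)
  show "(\<lambda>n. x - 2 * r n) \<longlonglongrightarrow> x" "(\<lambda>n. x - r n) \<longlonglongrightarrow> x"
    using tendsto_diff[OF tendsto_const[of x] tendsto_mult_right_zero[OF assms(2), of 2]]
      tendsto_diff[OF tendsto_const[of x] assms(2)] by simp_all
  show "\<forall>\<^sub>F n in sequentially. x - 2 * r n \<le> f n" "\<forall>\<^sub>F n in sequentially. f n \<le> x - r n"
    using assms(1) by (auto simp: lower_band_def less_imp_le)
qed

lemma lower_band_increment_bounds:
  assumes "lower_band x r f" and "0 < r (Suc n)" and "r (Suc n) \<le> r n / 3"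
  shows "r n / 3 < f (Suc n) - f n" and "f (Suc n) - f n < 2 * r n"
proof -
  have "x - 2 * r (Suc n) < f (Suc n)" "f (Suc n) < x - r (Suc n)"
    "x - 2 * r n < f n" "f n < x - r n"
    using assms(1) by (auto simp: lower_band_def)
  then show "r n / 3 < f (Suc n) - f n" "f (Suc n) - f n < 2 * r n"
    using assms(2,3) by linarith+
qed

definition approximating_sequences ::
    "real \<Rightarrow> real \<Rightarrow> (nat \<Rightarrow> real) \<Rightarrow> (nat \<Rightarrow> real) \<Rightarrow> (nat \<Rightarrow> real) \<Rightarrow> bool" where
  "approximating_sequences w z p q \<gamma> \<longleftrightarrow>
    (\<forall>n\<ge>1. p n \<in> \<rat> \<and> q n \<in> \<rat> \<and> \<gamma> n \<in> \<rat>) \<and>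
    (\<forall>n\<ge>1. p n < p (Suc n) \<and> q n < q (Suc n)) \<and>
    p \<longlonglongrightarrow> w \<and> q \<longlonglongrightarrow> z \<and>
    (\<forall>n\<ge>1. \<gamma> n > 0) \<and>
    (\<forall>n\<ge>1. 0 < p (Suc n) - p n \<and> p (Suc n) - p n < 1 \<and>
              q (Suc n) = q n + (p (Suc n) - p n) * (1 + \<gamma> n)) \<and>
    (\<lambda>n. \<gamma> n / (p (Suc n) - p n) ^ (n - 1)) \<longlonglongrightarrow> 0"

lemma approximating_sequences_from_increments:
  fixes p t :: "nat \<Rightarrow> real"
  assumes rat: "\<And>n. p n \<in> \<rat>" "\<And>n. t n \<in> \<rat>"
    and lim: "p \<longlonglongrightarrow> w" "t \<longlonglongrightarrow> z - w"
    and p_incr: "\<And>n. n \<ge> 1 \<Longrightarrow> 0 < p (Suc n) - p n \<and> p (Suc n) - p n < 1"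
    and t_incr: "\<And>n. n \<ge> 1 \<Longrightarrow> t n < t (Suc n)"
    and small: "(\<lambda>n. (t (Suc n) - t n) / (p (Suc n) - p n) ^ n) \<longlonglongrightarrow> 0"
  shows "approximating_sequences w z p (\<lambda>n. p n + t n)
           (\<lambda>n. (t (Suc n) - t n) / (p (Suc n) - p n))"
    (is "approximating_sequences w z p ?q ?\<gamma>")
  unfolding approximating_sequences_def
proof (intro conjI)
  show "\<forall>n\<ge>1. p n \<in> \<rat> \<and> ?q n \<in> \<rat> \<and> ?\<gamma> n \<in> \<rat>"
    using rat by auto
  show "\<forall>n\<ge>1. p n < p (Suc n) \<and> ?q n < ?q (Suc n)"
    using p_incr t_incr by (auto intro!: add_strict_mono)
  show "p \<longlonglongrightarrow> w" by (fact lim(1))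
  show "?q \<longlonglongrightarrow> z"
    using tendsto_add[OF lim] by simp
  show "\<forall>n\<ge>1. ?\<gamma> n > 0"
    using p_incr t_incr by auto
  show "\<forall>n\<ge>1. 0 < p (Suc n) - p n \<and> p (Suc n) - p n < 1 \<and>
              ?q (Suc n) = ?q n + (p (Suc n) - p n) * (1 + ?\<gamma> n)"
  proof (intro allI impI conjI)
    fix n :: nat
    assume "n \<ge> 1"
    with p_incr show "0 < p (Suc n) - p n" "p (Suc n) - p n < 1" by auto
    then show "?q (Suc n) = ?q n + (p (Suc n) - p n) * (1 + ?\<gamma> n)"
      by (simp add: distrib_left)
  qed
  have "\<forall>\<^sub>F n in sequentially.
      (t (Suc n) - t n) / (p (Suc n) - p n) ^ n = ?\<gamma> n / (p (Suc n) - p n) ^ (n - 1)"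
  proof (rule eventually_sequentiallyI)
    fix n :: nat
    assume "n \<ge> 1"
    then show "(t (Suc n) - t n) / (p (Suc n) - p n) ^ n = ?\<gamma> n / (p (Suc n) - p n) ^ (n - 1)"
      by (cases n) simp_all
  qed
  with small show "(\<lambda>n. ?\<gamma> n / (p (Suc n) - p n) ^ (n - 1)) \<longlonglongrightarrow> 0"
    by (rule Lim_transform_eventually)
qed

lemma approximating_sequences_from_scales:
  fixes \<rho> \<sigma> :: "nat \<Rightarrow> real"
  assumes \<rho>: "\<And>n. 0 < \<rho> n" "\<And>n. \<rho> (Suc n) \<le> \<rho> n / 3" "\<And>n. n \<ge> 1 \<Longrightarrow> \<rho> n \<le> 1/2"
    and \<sigma>: "\<And>n. 0 < \<sigma> n" "\<And>n. \<sigma> (Suc n) \<le> \<sigma> n / 3" "\<And>n. \<sigma> n \<le> (\<rho> n / 3) ^ n * \<rho> n"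
    and lim: "\<rho> \<longlonglongrightarrow> 0" "\<sigma> \<longlonglongrightarrow> 0"
  shows "\<exists>p q \<gamma>. approximating_sequences w z p q \<gamma>"
proof -
  obtain p where p: "\<And>n. p n \<in> \<rat>" "lower_band w \<rho> p"
    using Rats_lower_band_exists[of \<rho> w] \<rho>(1) by blast
  obtain t where t: "\<And>n. t n \<in> \<rat>" "lower_band (z - w) \<sigma> t"
    using Rats_lower_band_exists[of \<sigma> "z - w"] \<sigma>(1) by blast
  have \<Delta>p: "\<rho> n / 3 < p (Suc n) - p n" "p (Suc n) - p n < 2 * \<rho> n" for n
    using lower_band_increment_bounds[OF p(2) \<rho>(1)[of "Suc n"] \<rho>(2)[of n]] by auto
  have \<Delta>t: "\<sigma> n / 3 < t (Suc n) - t n" "t (Suc n) - t n < 2 * \<sigma> n" for n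
    using lower_band_increment_bounds[OF t(2) \<sigma>(1)[of "Suc n"] \<sigma>(2)[of n]] by auto
  have quotient_bounds: "0 \<le> (t (Suc n) - t n) / (p (Suc n) - p n) ^ n"
    "(t (Suc n) - t n) / (p (Suc n) - p n) ^ n \<le> 2 * \<rho> n" for n
  proof -
    have \<Delta>p_pos: "0 < p (Suc n) - p n" and \<Delta>t_pos: "0 < t (Suc n) - t n"
      using \<Delta>p(1)[of n] \<Delta>t(1)[of n] \<rho>(1)[of n] \<sigma>(1)[of n] by linarith+
    then show "0 \<le> (t (Suc n) - t n) / (p (Suc n) - p n) ^ n" by simp
    have "t (Suc n) - t n \<le> 2 * (\<rho> n / 3) ^ n * \<rho> n"
      using \<Delta>t(2)[of n] \<sigma>(3)[of n] by simp
    also have "\<dots> \<le> 2 * (p (Suc n) - p n) ^ n * \<rho> n"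
      using \<Delta>p(1)[of n] \<rho>(1)[of n] by (intro mult_right_mono mult_left_mono power_mono) auto
    finally show "(t (Suc n) - t n) / (p (Suc n) - p n) ^ n \<le> 2 * \<rho> n"
      using \<Delta>p_pos by (simp add: pos_divide_le_eq mult.commute mult.left_commute)
  qed
  have "(\<lambda>n. (t (Suc n) - t n) / (p (Suc n) - p n) ^ n) \<longlonglongrightarrow> 0"
  proof (rule tendsto_sandwich[of "\<lambda>_. 0" _ _ "\<lambda>n. 2 * \<rho> n"])
    show "\<forall>\<^sub>F n in sequentially. 0 \<le> (t (Suc n) - t n) / (p (Suc n) - p n) ^ n"
      "\<forall>\<^sub>F n in sequentially. (t (Suc n) - t n) / (p (Suc n) - p n) ^ n \<le> 2 * \<rho> n"
      by (intro always_eventually allI quotient_bounds)+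
    show "(\<lambda>_. 0) \<longlonglongrightarrow> (0::real)" by (rule tendsto_const)
    show "(\<lambda>n. 2 * \<rho> n) \<longlonglongrightarrow> 0" using tendsto_mult_right_zero[OF lim(1), of 2] .
  qed
  moreover have "0 < p (Suc n) - p n \<and> p (Suc n) - p n < 1" if "n \<ge> 1" for n
    using \<Delta>p[of n] \<rho>(1)[of n] \<rho>(3)[OF that] by linarith
  moreover have "t n < t (Suc n)" for n
    using \<Delta>t(1)[of n] \<sigma>(1)[of n] by simp
  ultimately show ?thesis
    using approximating_sequences_from_increments p(1) t(1)
      lower_band_LIMSEQ[OF p(2) lim(1)] lower_band_LIMSEQ[OF t(2) lim(2)] by blast
qed

lemma power_third_le_third:
  assumes "n < m"
  shows "(1/3::real) ^ m \<le> (1/3) ^ n / 3"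
  using power_decreasing[of "Suc n" m "1/3::real"] assms by simp

lemma power_third_square_eq:
  "(1/3::real) ^ (n * (n + 2)) = ((1/3) ^ n / 3) ^ n * (1/3) ^ n"
proof -
  have "(1/3::real) ^ n / 3 = (1/3) ^ Suc n" by simp
  moreover have "n * (n + 2) = Suc n * n + n" by simp
  ultimately show ?thesis by (simp only: power_add power_mult)
qed

theorem lemma5p5:
  fixes w z :: real
  shows "\<exists>p q \<gamma> :: nat \<Rightarrow> real.
    (\<forall>n\<ge>1. p n \<in> \<rat> \<and> q n \<in> \<rat> \<and> \<gamma> n \<in> \<rat>) \<and>
    (\<forall>n\<ge>1. p n < p (Suc n) \<and> q n < q (Suc n)) \<and>
    p \<longlonglongrightarrow> w \<and> q \<longlonglongrightarrow> z \<and>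
    (\<forall>n\<ge>1. \<gamma> n > 0) \<and>
    (\<forall>n\<ge>1. 0 < p (Suc n) - p n \<and> p (Suc n) - p n < 1 \<and>
              q (Suc n) = q n + (p (Suc n) - p n) * (1 + \<gamma> n)) \<and>
    (\<lambda>n. \<gamma> n / (p (Suc n) - p n) ^ (n - 1)) \<longlonglongrightarrow> 0"
proof -
  define \<rho> :: "nat \<Rightarrow> real" where "\<rho> n = (1/3) ^ n" for n
  define \<sigma> where "\<sigma> n = \<rho> (n * (n + 2))" for n
  have \<rho>_lim: "\<rho> \<longlonglongrightarrow> 0"
    unfolding \<rho>_def by (rule LIMSEQ_power_zero) simp
  have "\<sigma> = \<rho> \<circ> (\<lambda>n. n * (n + 2))" by (simp add: \<sigma>_def fun_eq_iff)
  then have \<sigma>_lim: "\<sigma> \<longlonglongrightarrow> 0"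
    using LIMSEQ_subseq_LIMSEQ[OF \<rho>_lim] strict_monoI_Suc[of "\<lambda>n. n * (n + 2)"] by simp
  have "\<exists>p q \<gamma>. approximating_sequences w z p q \<gamma>"
  proof (rule approximating_sequences_from_scales[OF _ _ _ _ _ _ \<rho>_lim \<sigma>_lim])
    show "0 < \<rho> n" "0 < \<sigma> n" for n
      by (simp_all add: \<sigma>_def \<rho>_def)
    show "\<rho> (Suc n) \<le> \<rho> n / 3" "\<sigma> (Suc n) \<le> \<sigma> n / 3" for n
      unfolding \<sigma>_def \<rho>_def by (rule power_third_le_third, simp)+
    show "\<rho> n \<le> 1/2" if "n \<ge> 1" for n
      using power_third_le_third[of 0 n] that by (simp add: \<rho>_def)
    show "\<sigma> n \<le> (\<rho> n / 3) ^ n * \<rho> n" for n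
      unfolding \<sigma>_def \<rho>_def power_third_square_eq ..
  qed
  then show ?thesis
    unfolding approximating_sequences_def .
qed

end
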